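(* For every instance of preemptive $s$-GPSP there is an optimal solution in which, for each scheduled job $j$, both its start time (the first time $j$ is processed) and its completion time belong to the set $T:=\{r_{j'}+\sum_{i=1}^{\overline p}s_iq_i : j'\in J,\ s_1,\dots,s_{\overline p}\in\{0,\dots,s\}\}$.
   Context: $s$-bounded General Profit Scheduling Problem ($s$-GPSP): given a set $J$ of $n$ jobs, each with release date $r_j$, processing time $p_j$, and a non-increasing profit function $f_j$ of the completion time, select a set $\bar J\subseteq J$ of at most $s$ jobs and schedule them on a single machine, possibly with preemption (jobs may be interrupted and resumed; no job is processed before its release date), so as to maximize $\sum_{j\in\bar J}f_j(C_j)$, $C_j$ being the completion time. $q_1,\dots,q_{\overline p}$ are the distinct processing times in the instance. *)

theory Defs
  imports Complex_Main
begin

text \<open>A preemptive schedule assigns to every job a finite list of processing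
  pieces (a, b), meaning the job is processed on the time interval [a, b].\<close>
type_synonym 'j sched = "'j \<Rightarrow> (real \<times> real) list"

definition piece_len :: "real \<times> real \<Rightarrow> real" where
  "piece_len ab = snd ab - fst ab"

definition feasible ::
  "'j set \<Rightarrow> ('j \<Rightarrow> real) \<Rightarrow> ('j \<Rightarrow> real) \<Rightarrow> nat \<Rightarrow> 'j set \<Rightarrow> 'j sched \<Rightarrow> bool" where
  "feasible J r p s S \<sigma> \<longleftrightarrow>
     S \<subseteq> J \<and> card S \<le> s \<and>
     (\<forall>j\<in>S. \<sigma> j \<noteq> [] \<and>
        (\<forall>ab\<in>set (\<sigma> j). r j \<le> fst ab \<and> fst ab < snd ab) \<and>
        sum_list (map piece_len (\<sigma> j)) = p j) \<and>
     (\<forall>j\<in>S. \<forall>k\<in>S. \<forall>u<length (\<sigma> j). \<forall>v<length (\<sigma> k).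
        (j, u) \<noteq> (k, v) \<longrightarrow>
          snd (\<sigma> j ! u) \<le> fst (\<sigma> k ! v) \<or> snd (\<sigma> k ! v) \<le> fst (\<sigma> j ! u))"

definition start_time :: "'j sched \<Rightarrow> 'j \<Rightarrow> real" where
  "start_time \<sigma> j = Min (fst ` set (\<sigma> j))"

definition completion_time :: "'j sched \<Rightarrow> 'j \<Rightarrow> real" where
  "completion_time \<sigma> j = Max (snd ` set (\<sigma> j))"

definition profit :: "('j \<Rightarrow> real \<Rightarrow> real) \<Rightarrow> 'j set \<Rightarrow> 'j sched \<Rightarrow> real" where
  "profit f S \<sigma> = (\<Sum>j\<in>S. f j (completion_time \<sigma> j))"

text \<open>The candidate time set T: r_j' plus a combination of the distinct
  processing times q (the elements of p ` J) with multiplicities in {0..s}.\<close>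
definition time_set :: "'j set \<Rightarrow> ('j \<Rightarrow> real) \<Rightarrow> ('j \<Rightarrow> real) \<Rightarrow> nat \<Rightarrow> real set" where
  "time_set J r p s = {r j' + (\<Sum>q\<in>p ` J. real (c q) * q) | j' c.
      j' \<in> J \<and> (\<forall>q\<in>p ` J. c q \<le> s)}"

end

theory Submission
  imports Defs "HOL-Library.Product_Lexorder" "HOL-Library.FuncSet"
begin

text \<open>Take any feasible schedule and rank its jobs by completion time. Rebuild the schedule
  greedily: in order of rank, each job is placed into the earliest idle time after its release
  date. In the new schedule every job j completes, and starts, at the end of a busy period, a
  stretch without idle time in which the machine works on a set X of at most s jobs and which
  begins at the release date r_k of one of them; hence that time is r_k + p(X), an element of T.
  The jobs of X are released no earlier than r_k and are completed by C'_j in the old schedule,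
  so p(X) is at most C'_j - r_k there, and no completion time, hence no profit, gets worse.
  Finally, as T is finite, only finitely many profits arise from schedules with completion
  times in T, and the best of them is optimal.\<close>

section \<open>Non-overlapping intervals\<close>

definition non_overlapping :: "real \<times> real \<Rightarrow> real \<times> real \<Rightarrow> bool" where
  "non_overlapping a b \<longleftrightarrow> snd a \<le> fst b \<or> snd b \<le> fst a"

lemma non_overlapping_commute: "non_overlapping a b \<longleftrightarrow> non_overlapping b a"
  unfolding non_overlapping_def by auto

lemma ex_max_on:
  fixes h :: "'a \<Rightarrow> 'b::linorder"
  assumes "finite I" "I \<noteq> {}"
  obtains i where "i \<in> I" "\<And>k. k \<in> I \<Longrightarrow> h k \<le> h i"
proof -
  have "Max (h ` I) \<in> h ` I" using assms by simp
  then obtain i where "i \<in> I" "h i = Max (h ` I)" by auto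
  with assms that show ?thesis by simp
qed

lemma ex_min_on:
  fixes h :: "'a \<Rightarrow> 'b::linorder"
  assumes "finite I" "I \<noteq> {}"
  obtains i where "i \<in> I" "\<And>k. k \<in> I \<Longrightarrow> h i \<le> h k"
proof -
  have "Min (h ` I) \<in> h ` I" using assms by simp
  then obtain i where "i \<in> I" "h i = Min (h ` I)" by auto
  with assms that show ?thesis by simp
qed

text \<open>The induction in both bounds below removes the interval with the latest start; every
  other interval ends before it starts.\<close>

lemma non_overlapping_before_latest:
  assumes "non_overlapping a b" "fst b < snd b" "fst a \<le> fst b"
  shows "snd a \<le> fst b"
  using assms unfolding non_overlapping_def by linarith

lemma sum_piece_len_le_if_non_overlapping:
  fixes g :: "'a \<Rightarrow> real \<times> real"
  assumes "finite I" "x \<le> y"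
    and "\<And>i. i \<in> I \<Longrightarrow> x \<le> fst (g i) \<and> fst (g i) < snd (g i) \<and> snd (g i) \<le> y"
    and "pairwise (\<lambda>i k. non_overlapping (g i) (g k)) I"
  shows "(\<Sum>i\<in>I. piece_len (g i)) \<le> y - x"
  using assms
proof (induction I arbitrary: y rule: finite_psubset_induct)
  case (psubset I)
  show ?case
  proof (cases "I = {}")
    case False
    obtain i0 where i0: "i0 \<in> I" "\<And>i. i \<in> I \<Longrightarrow> fst (g i) \<le> fst (g i0)"
      using ex_max_on[OF \<open>finite I\<close> False, of "\<lambda>i. fst (g i)"] by blast
    have "snd (g i) \<le> fst (g i0)" if "i \<in> I - {i0}" for i
      using that i0 psubset.prems(2,3)
      by (intro non_overlapping_before_latest) (auto simp: pairwise_def)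
    then have "(\<Sum>i\<in>I - {i0}. piece_len (g i)) \<le> fst (g i0) - x"
      using psubset.IH[of "I - {i0}" "fst (g i0)"] psubset.prems i0(1)
      by (auto intro: pairwise_subset)
    moreover have "(\<Sum>i\<in>I. piece_len (g i)) = piece_len (g i0) + (\<Sum>i\<in>I - {i0}. piece_len (g i))"
      using i0(1) \<open>finite I\<close> by (simp add: sum.remove)
    ultimately show ?thesis
      using psubset.prems(2) i0(1) by (force simp: piece_len_def)
  qed (use psubset.prems in simp)
qed

lemma sum_piece_len_ge_if_covering:
  fixes g :: "'a \<Rightarrow> real \<times> real"
  assumes "finite I" "x \<le> y"
    and "\<And>i. i \<in> I \<Longrightarrow> fst (g i) < snd (g i) \<and> snd (g i) \<le> y"
    and "pairwise (\<lambda>i k. non_overlapping (g i) (g k)) I"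
    and "\<And>z. x \<le> z \<Longrightarrow> z < y \<Longrightarrow> \<exists>i\<in>I. fst (g i) \<le> z \<and> z \<le> snd (g i)"
  shows "y - x \<le> (\<Sum>i\<in>I. piece_len (g i))"
  using assms
proof (induction I arbitrary: y rule: finite_psubset_induct)
  case (psubset I)
  have nonneg: "0 \<le> (\<Sum>i\<in>I'. piece_len (g i))" if "I' \<subseteq> I" for I'
    using psubset.prems(2) that by (intro sum_nonneg) (auto simp: piece_len_def less_imp_le)
  show ?case
  proof (cases "x < y")
    case True
    then have "I \<noteq> {}" using psubset.prems(4) by blast
    then obtain i0 where i0: "i0 \<in> I" "\<And>i. i \<in> I \<Longrightarrow> fst (g i) \<le> fst (g i0)"
      using ex_max_on[OF \<open>finite I\<close>, of "\<lambda>i. fst (g i)"] by blast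
    have before: "snd (g i) \<le> fst (g i0)" if "i \<in> I - {i0}" for i
      using that i0 psubset.prems(2,3)
      by (intro non_overlapping_before_latest) (auto simp: pairwise_def)
    have ends_at_y: "snd (g i0) = y"
    proof (rule ccontr)
      assume "snd (g i0) \<noteq> y"
      then have "snd (g i0) < y" using i0(1) psubset.prems(2) by force
      define z where "z = (max (snd (g i0)) x + y) / 2"
      have "x \<le> z" "z < y" "snd (g i0) < z"
        using \<open>snd (g i0) < y\<close> True unfolding z_def by auto
      then obtain i where i: "i \<in> I" "fst (g i) \<le> z" "z \<le> snd (g i)"
        using psubset.prems(4) by blast
      with \<open>snd (g i0) < z\<close> show False
        using before[of i] i0 psubset.prems(2)[of i0] by (cases "i = i0") force+
    qed
    have split: "(\<Sum>i\<in>I. piece_len (g i)) = piece_len (g i0) + (\<Sum>i\<in>I - {i0}. piece_len (g i))"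
      using i0(1) \<open>finite I\<close> by (simp add: sum.remove)
    show ?thesis
    proof (cases "fst (g i0) \<le> x")
      case True
      then show ?thesis using split ends_at_y nonneg[of "I - {i0}"] by (auto simp: piece_len_def)
    next
      case False
      have "\<exists>i\<in>I - {i0}. fst (g i) \<le> z \<and> z \<le> snd (g i)" if "x \<le> z" "z < fst (g i0)" for z
        using psubset.prems(4)[of z] that ends_at_y psubset.prems(2)[of i0] i0(1) by force
      then have "fst (g i0) - x \<le> (\<Sum>i\<in>I - {i0}. piece_len (g i))"
        using psubset.IH[of "I - {i0}" "fst (g i0)"] psubset.prems i0(1) before False
        by (auto intro: pairwise_subset)
      then show ?thesis using split ends_at_y by (simp add: piece_len_def)
    qed
  qed (use nonneg[of I] psubset.prems(1) in simp)
qed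

section \<open>Schedules as families of pieces\<close>

text \<open>A piece is indexed by a job and its position in the job's list, so that, as in the
  definition of feasibility, equal intervals of different positions count separately.\<close>

definition pieces :: "'j sched \<Rightarrow> 'j set \<Rightarrow> ('j \<times> nat) set" where
  "pieces \<sigma> Y = (SIGMA i:Y. {..<length (\<sigma> i)})"

definition piece :: "'j sched \<Rightarrow> 'j \<times> nat \<Rightarrow> real \<times> real" where
  "piece \<sigma> iu = \<sigma> (fst iu) ! snd iu"

lemma mem_pieces_iff [simp]: "(i, u) \<in> pieces \<sigma> Y \<longleftrightarrow> i \<in> Y \<and> u < length (\<sigma> i)"
  unfolding pieces_def by simp

lemma piece_Pair [simp]: "piece \<sigma> (i, u) = \<sigma> i ! u"
  unfolding piece_def by simp

lemma pieces_mono: "X \<subseteq> Y \<Longrightarrow> pieces \<sigma> X \<subseteq> pieces \<sigma> Y"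
  unfolding pieces_def by auto

lemma finite_pieces: "finite Y \<Longrightarrow> finite (pieces \<sigma> Y)"
  unfolding pieces_def by auto

lemma piece_in_set: "iu \<in> pieces \<sigma> Y \<Longrightarrow> piece \<sigma> iu \<in> set (\<sigma> (fst iu))"
  by (cases iu) simp

definition processing :: "'j sched \<Rightarrow> 'j set \<Rightarrow> real" where
  "processing \<sigma> X = (\<Sum>i\<in>X. sum_list (map piece_len (\<sigma> i)))"

lemma sum_piece_len_pieces:
  assumes "finite X"
  shows "(\<Sum>iu\<in>pieces \<sigma> X. piece_len (piece \<sigma> iu)) = processing \<sigma> X"
proof -
  have "processing \<sigma> X = (\<Sum>i\<in>X. \<Sum>u<length (\<sigma> i). piece_len (\<sigma> i ! u))"
    unfolding processing_def by (simp add: sum_list_sum_nth atLeast0LessThan)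
  also have "\<dots> = (\<Sum>iu\<in>pieces \<sigma> X. piece_len (piece \<sigma> iu))"
    using assms unfolding pieces_def by (subst sum.Sigma) (auto simp: case_prod_unfold piece_def)
  finally show ?thesis ..
qed

definition valid_sched :: "('j \<Rightarrow> real) \<Rightarrow> 'j set \<Rightarrow> 'j sched \<Rightarrow> bool" where
  "valid_sched r Y \<sigma> \<longleftrightarrow> (\<forall>i\<in>Y. \<sigma> i \<noteq> []) \<and>
     (\<forall>iu\<in>pieces \<sigma> Y. r (fst iu) \<le> fst (piece \<sigma> iu) \<and> fst (piece \<sigma> iu) < snd (piece \<sigma> iu)) \<and>
     pairwise (\<lambda>iu kv. non_overlapping (piece \<sigma> iu) (piece \<sigma> kv)) (pieces \<sigma> Y)"

lemma feasible_iff_valid_sched: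
  "feasible J r p s S \<sigma> \<longleftrightarrow> S \<subseteq> J \<and> card S \<le> s \<and> valid_sched r S \<sigma> \<and>
     (\<forall>j\<in>S. sum_list (map piece_len (\<sigma> j)) = p j)"
  unfolding feasible_def valid_sched_def pairwise_def non_overlapping_def pieces_def piece_def
  by (auto simp: all_set_conv_all_nth; blast)

lemma valid_schedD:
  assumes "valid_sched r Y \<sigma>" "iu \<in> pieces \<sigma> Y"
  shows "r (fst iu) \<le> fst (piece \<sigma> iu)" "fst (piece \<sigma> iu) < snd (piece \<sigma> iu)"
  using assms unfolding valid_sched_def by auto

lemma valid_sched_nonempty: "valid_sched r Y \<sigma> \<Longrightarrow> i \<in> Y \<Longrightarrow> \<sigma> i \<noteq> []"
  unfolding valid_sched_def by auto

lemma valid_sched_non_overlapping: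
  assumes "valid_sched r Y \<sigma>" "iu \<in> pieces \<sigma> Y" "kv \<in> pieces \<sigma> Y" "iu \<noteq> kv"
  shows "non_overlapping (piece \<sigma> iu) (piece \<sigma> kv)"
  using assms unfolding valid_sched_def pairwise_def by auto

lemma valid_sched_subset: "X \<subseteq> Y \<Longrightarrow> valid_sched r Y \<sigma> \<Longrightarrow> valid_sched r X \<sigma>"
  unfolding valid_sched_def using pieces_mono by (blast intro: pairwise_subset)

lemma piece_end_le_completion_time:
  "iu \<in> pieces \<sigma> Y \<Longrightarrow> snd (piece \<sigma> iu) \<le> completion_time \<sigma> (fst iu)"
  unfolding completion_time_def by (intro Max_ge) (auto dest: piece_in_set)

lemma start_time_le_piece_start:
  "iu \<in> pieces \<sigma> Y \<Longrightarrow> start_time \<sigma> (fst iu) \<le> fst (piece \<sigma> iu)"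
  unfolding start_time_def by (intro Min_le) (auto dest: piece_in_set)

lemma completion_time_attained:
  assumes "i \<in> Y" "\<sigma> i \<noteq> []"
  obtains u where "(i, u) \<in> pieces \<sigma> Y" "snd (\<sigma> i ! u) = completion_time \<sigma> i"
proof -
  have "completion_time \<sigma> i \<in> snd ` set (\<sigma> i)"
    unfolding completion_time_def using assms(2) by (intro Max_in) auto
  then obtain ab where ab: "ab \<in> set (\<sigma> i)" "snd ab = completion_time \<sigma> i" by auto
  then obtain u where "u < length (\<sigma> i)" "\<sigma> i ! u = ab" by (auto simp: in_set_conv_nth)
  then show ?thesis using that[of u] assms(1) ab(2) by simp
qed

lemma start_time_attained:
  assumes "i \<in> Y" "\<sigma> i \<noteq> []"
  obtains u where "(i, u) \<in> pieces \<sigma> Y" "fst (\<sigma> i ! u) = start_time \<sigma> i"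
proof -
  have "start_time \<sigma> i \<in> fst ` set (\<sigma> i)"
    unfolding start_time_def using assms(2) by (intro Min_in) auto
  then obtain ab where ab: "ab \<in> set (\<sigma> i)" "fst ab = start_time \<sigma> i" by auto
  then obtain u where "u < length (\<sigma> i)" "\<sigma> i ! u = ab" by (auto simp: in_set_conv_nth)
  then show ?thesis using that[of u] assms(1) ab(2) by simp
qed

definition busy :: "'j sched \<Rightarrow> 'j set \<Rightarrow> real \<Rightarrow> bool" where
  "busy \<sigma> Y z \<longleftrightarrow> (\<exists>iu\<in>pieces \<sigma> Y. fst (piece \<sigma> iu) \<le> z \<and> z \<le> snd (piece \<sigma> iu))"

definition busy_on :: "'j sched \<Rightarrow> 'j set \<Rightarrow> real \<Rightarrow> real \<Rightarrow> bool" where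
  "busy_on \<sigma> Y a b \<longleftrightarrow> (\<forall>z\<in>{a..<b}. busy \<sigma> Y z)"

lemma busy_mono: "X \<subseteq> Y \<Longrightarrow> busy \<sigma> X z \<Longrightarrow> busy \<sigma> Y z"
  unfolding busy_def using pieces_mono by blast

lemma busy_on_piece:
  "iu \<in> pieces \<sigma> Y \<Longrightarrow> busy_on \<sigma> Y (fst (piece \<sigma> iu)) (snd (piece \<sigma> iu))"
  unfolding busy_on_def busy_def by auto

lemma busy_on_trans: "busy_on \<sigma> Y a b \<Longrightarrow> busy_on \<sigma> Y b c \<Longrightarrow> busy_on \<sigma> Y a c"
  unfolding busy_on_def by (metis atLeastLessThan_iff linorder_not_le)

lemma busy_on_extend_by_piece:
  assumes "iu \<in> pieces \<sigma> Y" "fst (piece \<sigma> iu) \<le> a" "a \<le> snd (piece \<sigma> iu)" "busy_on \<sigma> Y a b"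
  shows "busy_on \<sigma> Y (fst (piece \<sigma> iu)) b"
  unfolding busy_on_def
proof
  fix z assume z: "z \<in> {fst (piece \<sigma> iu)..<b}"
  show "busy \<sigma> Y z"
  proof (cases "z < a")
    case True
    then show ?thesis using assms(1,3) z unfolding busy_def by force
  qed (use assms(4) z in \<open>auto simp: busy_on_def\<close>)
qed

text \<open>Smaller values of the rank mean higher priority: while job i is released but unfinished,
  the machine is busy with jobs of priority at least that of i.\<close>

definition work_conserving ::
  "('j \<Rightarrow> real) \<Rightarrow> ('j \<Rightarrow> 'a::linorder) \<Rightarrow> 'j set \<Rightarrow> 'j sched \<Rightarrow> bool" where
  "work_conserving r \<rho> S \<sigma> \<longleftrightarrow>
     (\<forall>i\<in>S. busy_on \<sigma> {k\<in>S. \<rho> k \<le> \<rho> i} (r i) (completion_time \<sigma> i))"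

section \<open>Greedy construction of work-conserving schedules\<close>

definition fills_gaps :: "(real \<times> real) set \<Rightarrow> real \<Rightarrow> real \<Rightarrow> (real \<times> real) list \<Rightarrow> bool" where
  "fills_gaps F r p Q \<longleftrightarrow> Q \<noteq> [] \<and> (\<forall>q\<in>set Q. r \<le> fst q \<and> fst q < snd q) \<and>
     sum_list (map piece_len Q) = p \<and> sorted_wrt (\<lambda>a b. snd a \<le> fst b) Q \<and>
     (\<forall>q\<in>set Q. \<forall>x\<in>F. non_overlapping q x) \<and>
     (\<forall>z. r \<le> z \<longrightarrow> (\<exists>q\<in>set Q. z \<le> snd q) \<longrightarrow> (\<exists>x\<in>F \<union> set Q. fst x \<le> z \<and> z \<le> snd x))"

lemma fills_gaps_single:
  assumes "0 < p" "\<forall>x\<in>F. snd x \<le> r \<or> r + p \<le> fst x"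
  shows "fills_gaps F r p [(r, r + p)]"
  using assms unfolding fills_gaps_def non_overlapping_def piece_len_def by auto

lemma fills_gaps_prepend_gap:
  assumes x0: "x0 \<in> F" "r < snd x0" "fst x0 < snd x0"
    and first: "\<forall>x\<in>F. snd x \<le> r \<or> fst x0 \<le> fst x"
    and Q: "fills_gaps (F - {x0}) (snd x0) p Q"
  shows "fills_gaps F r (max 0 (fst x0 - r) + p) ((if r < fst x0 then [(r, fst x0)] else []) @ Q)"
    (is "fills_gaps F r _ (?G @ Q)")
proof -
  have Q_after: "snd x0 \<le> fst q" "fst q < snd q" if "q \<in> set Q" for q
    using Q that unfolding fills_gaps_def by auto
  have G: "snd g = fst x0" if "g \<in> set ?G" for g
    using that by (auto split: if_splits)
  have "non_overlapping q x" if q: "q \<in> set (?G @ Q)" and x: "x \<in> F" for q x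
  proof (cases "q \<in> set Q")
    case True
    then show ?thesis
      using Q_after[of q] Q x unfolding fills_gaps_def non_overlapping_def by (cases "x = x0") auto
  next
    case False
    then have "q = (r, fst x0)" using q by (auto split: if_splits)
    then show ?thesis using first x unfolding non_overlapping_def by auto
  qed
  moreover have "sorted_wrt (\<lambda>a b. snd a \<le> fst b) (?G @ Q)"
    using Q Q_after x0(3) unfolding fills_gaps_def by (force simp: sorted_wrt_append)
  moreover have "\<exists>x\<in>F \<union> set (?G @ Q). fst x \<le> z \<and> z \<le> snd x"
    if z: "r \<le> z" "\<exists>q\<in>set (?G @ Q). z \<le> snd q" for z
  proof (cases "z \<le> snd x0")
    case True
    then show ?thesis using x0(1) z(1) by (cases "fst x0 \<le> z") auto
  next
    case False
    then have "\<exists>q\<in>set Q. z \<le> snd q" using z(2) G x0(3) by fastforce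
    then obtain x where "x \<in> F - {x0} \<union> set Q" "fst x \<le> z" "z \<le> snd x"
      using Q False unfolding fills_gaps_def by (meson linorder_not_le order_less_imp_le)
    then show ?thesis by auto
  qed
  moreover have "r \<le> fst q \<and> fst q < snd q" if "q \<in> set (?G @ Q)" for q
    using that Q_after[of q] x0(2) by (auto split: if_splits)
  moreover have "sum_list (map piece_len (?G @ Q)) = max 0 (fst x0 - r) + p"
    using Q unfolding fills_gaps_def by (simp add: piece_len_def)
  moreover have "?G @ Q \<noteq> []"
    using Q unfolding fills_gaps_def by simp
  ultimately show ?thesis
    unfolding fills_gaps_def by blast
qed

lemma ex_fills_gaps:
  assumes "finite F" "\<forall>x\<in>F. fst x < snd x" "0 < p"
  shows "\<exists>Q. fills_gaps F r p Q"
  using assms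
proof (induction F arbitrary: r p rule: finite_psubset_induct)
  case (psubset F)
  show ?case
  proof (cases "\<forall>x\<in>F. snd x \<le> r \<or> r + p \<le> fst x")
    case True
    then show ?thesis using fills_gaps_single psubset.prems(2) by blast
  next
    case False
    then have "{x\<in>F. r < snd x} \<noteq> {}" by force
    then obtain x0 where "x0 \<in> {x\<in>F. r < snd x}" "\<And>x. x \<in> {x\<in>F. r < snd x} \<Longrightarrow> fst x0 \<le> fst x"
      using ex_min_on[of "{x\<in>F. r < snd x}" fst] psubset.hyps(1) by auto
    then have x0: "x0 \<in> F" "r < snd x0" and first: "\<forall>x\<in>F. snd x \<le> r \<or> fst x0 \<le> fst x"
      by force+
    have "fst x0 < r + p" using False first by fastforce
    then obtain Q where "fills_gaps (F - {x0}) (snd x0) (p - max 0 (fst x0 - r)) Q"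
      using psubset.IH[of "F - {x0}" "p - max 0 (fst x0 - r)" "snd x0"] psubset.prems x0(1) by force
    with fills_gaps_prepend_gap[OF x0 _ first] psubset.prems(1) x0(1) show ?thesis
      by fastforce
  qed
qed

lemma pieces_fun_upd_other: "x \<notin> Y \<Longrightarrow> pieces (\<sigma>(x := Q)) Y = pieces \<sigma> Y"
  unfolding pieces_def by (rule Sigma_cong) auto

lemma pieces_fun_upd_insert:
  "x \<notin> S \<Longrightarrow> pieces (\<sigma>(x := Q)) (insert x S) = pieces \<sigma> S \<union> {x} \<times> {..<length Q}"
  unfolding pieces_def by (auto split: if_splits)

lemma piece_fun_upd_pieces: "x \<notin> Y \<Longrightarrow> iu \<in> pieces \<sigma> Y \<Longrightarrow> piece (\<sigma>(x := Q)) iu = piece \<sigma> iu"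
  by (cases iu) (metis fun_upd_other mem_pieces_iff piece_Pair)

lemma busy_fun_upd_other: "x \<notin> Y \<Longrightarrow> busy (\<sigma>(x := Q)) Y z \<longleftrightarrow> busy \<sigma> Y z"
  unfolding busy_def pieces_fun_upd_other by (intro bex_cong refl) (simp add: piece_fun_upd_pieces)

lemma busy_on_mono: "X \<subseteq> Y \<Longrightarrow> busy_on \<sigma> X a b \<Longrightarrow> busy_on \<sigma> Y a b"
  unfolding busy_on_def using busy_mono by blast

lemma sorted_wrt_non_overlapping:
  assumes "sorted_wrt (\<lambda>a b. snd a \<le> fst b) Q" "u < length Q" "v < length Q" "u \<noteq> v"
  shows "non_overlapping (Q ! u) (Q ! v)"
  using assms unfolding sorted_wrt_iff_nth_less non_overlapping_def
  by (cases "u < v") (auto simp: not_less_iff_gr_or_eq)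

lemma valid_sched_fun_upd:
  assumes \<sigma>: "valid_sched r S \<sigma>" and "x \<notin> S"
    and Q: "fills_gaps (piece \<sigma> ` pieces \<sigma> S) (r x) p Q"
  shows "valid_sched r (insert x S) (\<sigma>(x := Q))"
proof -
  let ?\<sigma> = "\<sigma>(x := Q)"
  have cases: "(\<exists>u<length Q. iu = (x, u)) \<or> iu \<in> pieces \<sigma> S \<and> piece ?\<sigma> iu = piece \<sigma> iu"
    if "iu \<in> pieces ?\<sigma> (insert x S)" for iu
    using that piece_fun_upd_pieces[OF \<open>x \<notin> S\<close>, of iu \<sigma> Q]
    unfolding pieces_fun_upd_insert[OF \<open>x \<notin> S\<close>] by auto
  have Q_F: "non_overlapping (Q ! u) (piece \<sigma> kv)" if "u < length Q" "kv \<in> pieces \<sigma> S" for u kv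
    using Q that unfolding fills_gaps_def by auto
  have "non_overlapping (piece ?\<sigma> iu) (piece ?\<sigma> kv)"
    if iu: "iu \<in> pieces ?\<sigma> (insert x S)" and kv: "kv \<in> pieces ?\<sigma> (insert x S)" and "iu \<noteq> kv" for iu kv
  proof -
    have sorted: "sorted_wrt (\<lambda>a b. snd a \<le> fst b) Q" using Q unfolding fills_gaps_def by blast
    show ?thesis
      using cases[OF iu] cases[OF kv]
    proof (elim disjE conjE exE)
      fix u v assume "u < length Q" "iu = (x, u)" "v < length Q" "kv = (x, v)"
      then show ?thesis using sorted_wrt_non_overlapping[OF sorted] \<open>iu \<noteq> kv\<close> by auto
    next
      fix u assume "u < length Q" "iu = (x, u)" "kv \<in> pieces \<sigma> S" "piece ?\<sigma> kv = piece \<sigma> kv"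
      then show ?thesis using Q_F by simp
    next
      fix v assume "iu \<in> pieces \<sigma> S" "piece ?\<sigma> iu = piece \<sigma> iu" "v < length Q" "kv = (x, v)"
      then show ?thesis using Q_F non_overlapping_commute by simp
    next
      assume "iu \<in> pieces \<sigma> S" "piece ?\<sigma> iu = piece \<sigma> iu" "kv \<in> pieces \<sigma> S" "piece ?\<sigma> kv = piece \<sigma> kv"
      then show ?thesis using valid_sched_non_overlapping[OF \<sigma>] \<open>iu \<noteq> kv\<close> by simp
    qed
  qed
  moreover have "r (fst iu) \<le> fst (piece ?\<sigma> iu) \<and> fst (piece ?\<sigma> iu) < snd (piece ?\<sigma> iu)"
    if "iu \<in> pieces ?\<sigma> (insert x S)" for iu
    using cases[OF that]
  proof (elim disjE conjE exE)
    fix u assume "u < length Q" "iu = (x, u)"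
    then show ?thesis using Q nth_mem[of u Q] unfolding fills_gaps_def by auto
  next
    assume "iu \<in> pieces \<sigma> S" "piece ?\<sigma> iu = piece \<sigma> iu"
    then show ?thesis using valid_schedD[OF \<sigma>, of iu] by simp
  qed
  ultimately show ?thesis
    using \<sigma> Q unfolding valid_sched_def fills_gaps_def pairwise_def by auto
qed

lemma work_conserving_fun_upd:
  assumes wc: "work_conserving r \<rho> S \<sigma>" and "x \<notin> S" and top: "\<forall>y\<in>S. \<rho> y \<le> \<rho> x"
    and Q: "fills_gaps (piece \<sigma> ` pieces \<sigma> S) (r x) p Q"
  shows "work_conserving r \<rho> (insert x S) (\<sigma>(x := Q))"
  unfolding work_conserving_def
proof
  let ?\<sigma> = "\<sigma>(x := Q)"
  fix i assume i: "i \<in> insert x S"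
  show "busy_on ?\<sigma> {k\<in>insert x S. \<rho> k \<le> \<rho> i} (r i) (completion_time ?\<sigma> i)"
  proof (cases "i = x")
    case False
    then have "i \<in> S" using i by simp
    then have "busy_on \<sigma> {k\<in>S. \<rho> k \<le> \<rho> i} (r i) (completion_time \<sigma> i)"
      using wc unfolding work_conserving_def by blast
    then have "busy_on ?\<sigma> {k\<in>S. \<rho> k \<le> \<rho> i} (r i) (completion_time ?\<sigma> i)"
      using \<open>x \<notin> S\<close> False by (simp add: busy_on_def busy_fun_upd_other completion_time_def)
    then show ?thesis by (rule busy_on_mono[rotated]) auto
  next
    case True
    have all: "{k\<in>insert x S. \<rho> k \<le> \<rho> i} = insert x S" using top True by auto
    have "Q \<noteq> []" using Q unfolding fills_gaps_def by blast
    then obtain u where u: "u < length Q" "snd (Q ! u) = completion_time ?\<sigma> x"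
      using completion_time_attained[of x "{x}" ?\<sigma>] by auto
    show ?thesis unfolding all busy_on_def
    proof
      fix z assume z: "z \<in> {r i..<completion_time ?\<sigma> i}"
      then have "\<exists>q\<in>set Q. z \<le> snd q" using u True by (metis atLeastLessThan_iff less_eq_real_def nth_mem)
      moreover have "r x \<le> z" using z True by simp
      ultimately obtain y where y: "y \<in> piece \<sigma> ` pieces \<sigma> S \<union> set Q" "fst y \<le> z" "z \<le> snd y"
        using Q unfolding fills_gaps_def by blast
      then show "busy ?\<sigma> (insert x S) z"
      proof (elim UnE imageE)
        fix iu assume "iu \<in> pieces \<sigma> S" "y = piece \<sigma> iu"
        then show ?thesis using y piece_fun_upd_pieces[OF \<open>x \<notin> S\<close>, of iu \<sigma> Q]
          unfolding busy_def pieces_fun_upd_insert[OF \<open>x \<notin> S\<close>] by (intro bexI[of _ iu]) auto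
      next
        assume "y \<in> set Q"
        then obtain v where "v < length Q" "y = Q ! v" by (auto simp: in_set_conv_nth)
        then show ?thesis using y unfolding busy_def pieces_fun_upd_insert[OF \<open>x \<notin> S\<close>]
          by (intro bexI[of _ "(x, v)"]) auto
      qed
    qed
  qed
qed

text \<open>Jobs are inserted in order of decreasing priority, each filling the earliest gaps
  left after its release date.\<close>

lemma ex_work_conserving_schedule:
  fixes \<rho> :: "'j \<Rightarrow> 'a::linorder"
  assumes "finite S" "\<And>j. j \<in> S \<Longrightarrow> 0 < p j"
  shows "\<exists>\<sigma>. valid_sched r S \<sigma> \<and> (\<forall>j\<in>S. sum_list (map piece_len (\<sigma> j)) = p j) \<and>
    work_conserving r \<rho> S \<sigma>"
  using assms
proof (induction S rule: finite_ranking_induct[where f = \<rho>])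
  case empty
  show ?case by (auto simp: valid_sched_def work_conserving_def pieces_def)
next
  case (insert x S)
  show ?case
  proof (cases "x \<in> S")
    case True
    then show ?thesis using insert by (simp add: insert_absorb)
  next
    case False
    obtain \<sigma> where \<sigma>: "valid_sched r S \<sigma>" "\<forall>j\<in>S. sum_list (map piece_len (\<sigma> j)) = p j"
      "work_conserving r \<rho> S \<sigma>"
      using insert by auto
    have "finite (piece \<sigma> ` pieces \<sigma> S)" using insert.hyps(1) by (simp add: finite_pieces)
    moreover have "\<forall>y\<in>piece \<sigma> ` pieces \<sigma> S. fst y < snd y" using valid_schedD(2)[OF \<sigma>(1)] by blast
    ultimately obtain Q where Q: "fills_gaps (piece \<sigma> ` pieces \<sigma> S) (r x) (p x) Q"
      using ex_fills_gaps insert.prems by blast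
    have "sum_list (map piece_len ((\<sigma>(x := Q)) j)) = p j" if "j \<in> insert x S" for j
      using that Q \<sigma>(2) unfolding fills_gaps_def by auto
    then show ?thesis
      using valid_sched_fun_upd[OF \<sigma>(1) False Q] work_conserving_fun_upd[OF \<sigma>(3) False _ Q] insert.hyps(2)
      by blast
  qed
qed

section \<open>Busy periods\<close>

lemma processing_le_window:
  assumes "finite X" "valid_sched r X \<sigma>" "b \<le> t"
    and "\<And>iu. iu \<in> pieces \<sigma> X \<Longrightarrow> b \<le> fst (piece \<sigma> iu) \<and> snd (piece \<sigma> iu) \<le> t"
  shows "processing \<sigma> X \<le> t - b"
  unfolding sum_piece_len_pieces[OF assms(1), symmetric]
  using assms valid_schedD(2)[OF assms(2)] valid_sched_non_overlapping[OF assms(2)]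
  by (intro sum_piece_len_le_if_non_overlapping) (auto simp: finite_pieces pairwise_def)

lemma processing_eq_window:
  assumes "finite X" "valid_sched r X \<sigma>" "b \<le> t"
    and "\<And>iu. iu \<in> pieces \<sigma> X \<Longrightarrow> b \<le> fst (piece \<sigma> iu) \<and> snd (piece \<sigma> iu) \<le> t"
    and "busy_on \<sigma> X b t"
  shows "processing \<sigma> X = t - b"
proof (rule antisym)
  show "t - b \<le> processing \<sigma> X"
    unfolding sum_piece_len_pieces[OF assms(1), symmetric]
    using assms valid_schedD(2)[OF assms(2)] valid_sched_non_overlapping[OF assms(2)]
    by (intro sum_piece_len_ge_if_covering) (auto simp: finite_pieces pairwise_def busy_on_def busy_def)
qed (rule processing_le_window[OF assms(1-4)])

lemma busy_on_shorten: "busy_on \<sigma> Y a c \<Longrightarrow> b \<le> c \<Longrightarrow> busy_on \<sigma> Y a b"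
  unfolding busy_on_def by auto

text \<open>The busy stretch is extended to the left as far as possible; had a job processed in it
  been released earlier, the machine would already have been busy before.\<close>

lemma busy_period:
  assumes "finite Y" and valid: "valid_sched r Y \<sigma>"
    and no_idle: "\<And>i. i \<in> Y \<Longrightarrow> busy_on \<sigma> Y (r i) (completion_time \<sigma> i)"
    and start: "iu0 \<in> pieces \<sigma> Y" "fst (piece \<sigma> iu0) < t" "busy_on \<sigma> Y (fst (piece \<sigma> iu0)) t"
    and finished: "\<And>iu. iu \<in> pieces \<sigma> Y \<Longrightarrow> fst (piece \<sigma> iu) < t \<Longrightarrow> completion_time \<sigma> (fst iu) \<le> t"
  obtains X k where "X \<subseteq> Y" "k \<in> X" "\<And>i. i \<in> X \<Longrightarrow> r k \<le> r i"
    "processing \<sigma> X = t - r k"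
proof -
  define B where "B = {iu \<in> pieces \<sigma> Y. fst (piece \<sigma> iu) < t \<and> busy_on \<sigma> Y (fst (piece \<sigma> iu)) t}"
  have "iu0 \<in> B" using start unfolding B_def by blast
  moreover have "finite B"
    using \<open>finite Y\<close> unfolding B_def by (auto intro: finite_subset[OF _ finite_pieces])
  ultimately obtain iub where iub: "iub \<in> B" and min: "\<And>iu. iu \<in> B \<Longrightarrow> fst (piece \<sigma> iub) \<le> fst (piece \<sigma> iu)"
    using ex_min_on[of B "\<lambda>iu. fst (piece \<sigma> iu)"] by (metis empty_iff)
  define b where "b = fst (piece \<sigma> iub)"
  have b: "b < t" "busy_on \<sigma> Y b t" using iub unfolding B_def b_def by auto
  have not_before_b: "b \<le> fst (piece \<sigma> iu)"
    if "iu \<in> pieces \<sigma> Y" "fst (piece \<sigma> iu) \<le> a" "a \<le> snd (piece \<sigma> iu)" "a < t" "busy_on \<sigma> Y a t" for iu a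
    using busy_on_extend_by_piece[OF that(1-3,5)] that(1,2,4) min[of iu] unfolding B_def b_def by auto
  define X where "X = {i \<in> Y. \<exists>u. (i, u) \<in> pieces \<sigma> Y \<and> b \<le> fst (\<sigma> i ! u) \<and> fst (\<sigma> i ! u) < t}"
  have release: "b \<le> r i" if "i \<in> X" for i
  proof (rule ccontr)
    assume "\<not> b \<le> r i"
    obtain u where u: "(i, u) \<in> pieces \<sigma> Y" "b \<le> fst (\<sigma> i ! u)"
      using \<open>i \<in> X\<close> unfolding X_def by blast
    have "b < completion_time \<sigma> i"
      using valid_schedD(2)[OF valid u(1)] piece_end_le_completion_time[OF u(1)] u(2) by simp
    moreover have iY: "i \<in> Y" using that unfolding X_def by blast
    ultimately have "busy_on \<sigma> Y (r i) b"
      using busy_on_shorten[OF no_idle] by (simp add: less_imp_le)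
    then have "busy_on \<sigma> Y (r i) t" using b(2) by (rule busy_on_trans)
    moreover obtain kv where kv: "kv \<in> pieces \<sigma> Y" "fst (piece \<sigma> kv) \<le> r i" "r i \<le> snd (piece \<sigma> kv)"
      using no_idle[OF iY] \<open>b < completion_time \<sigma> i\<close> \<open>\<not> b \<le> r i\<close>
      unfolding busy_on_def busy_def by force
    ultimately show False
      using not_before_b[OF kv] \<open>\<not> b \<le> r i\<close> b(1) by linarith
  qed
  obtain k u where k: "iub = (k, u)" by fastforce
  have "k \<in> X" "r k = b"
    using iub release valid_schedD(1)[OF valid, of iub] unfolding B_def X_def b_def k by force+
  have "X \<subseteq> Y" unfolding X_def by blast
  have "processing \<sigma> X = t - b"
  proof (rule processing_eq_window)
    show "finite X" using \<open>X \<subseteq> Y\<close> \<open>finite Y\<close> by (rule finite_subset)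
    show "valid_sched r X \<sigma>" using \<open>X \<subseteq> Y\<close> valid by (rule valid_sched_subset)
    show "b \<le> t" using b(1) by simp
    show "b \<le> fst (piece \<sigma> iu) \<and> snd (piece \<sigma> iu) \<le> t" if iu_X: "iu \<in> pieces \<sigma> X" for iu
    proof -
      obtain i u where iu: "iu = (i, u)" "i \<in> X" "(i, u) \<in> pieces \<sigma> Y"
        using iu_X \<open>X \<subseteq> Y\<close> by (cases iu) auto
      obtain u' where "(i, u') \<in> pieces \<sigma> Y" "fst (\<sigma> i ! u') < t"
        using \<open>i \<in> X\<close> unfolding X_def by blast
      then have "completion_time \<sigma> i \<le> t" using finished[of "(i, u')"] by simp
      then show ?thesis
        using release[OF \<open>i \<in> X\<close>] valid_schedD(1)[OF valid iu(3)] piece_end_le_completion_time[OF iu(3)] iu(1)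
        by simp
    qed
    show "busy_on \<sigma> X b t"
      unfolding busy_on_def
    proof
      fix z assume z: "z \<in> {b..<t}"
      then obtain iu where iu: "iu \<in> pieces \<sigma> Y" "fst (piece \<sigma> iu) \<le> z" "z \<le> snd (piece \<sigma> iu)"
        using b(2) unfolding busy_on_def busy_def by blast
      have "busy_on \<sigma> Y z t" using b(2) z unfolding busy_on_def by simp
      then have "b \<le> fst (piece \<sigma> iu)" using not_before_b[OF iu] z by simp
      then have "iu \<in> pieces \<sigma> X"
        using iu z unfolding X_def by (cases iu) auto
      then show "busy \<sigma> X z" using iu unfolding busy_def by blast
    qed
  qed
  then show ?thesis using that \<open>X \<subseteq> Y\<close> \<open>k \<in> X\<close> \<open>r k = b\<close> release by blast
qed

lemma release_lt_completion_time:
  assumes "valid_sched r S \<sigma>" "i \<in> S"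
  shows "r i < completion_time \<sigma> i"
proof -
  obtain u where u: "(i, u) \<in> pieces \<sigma> S" "snd (\<sigma> i ! u) = completion_time \<sigma> i"
    using completion_time_attained[of i S \<sigma>] assms valid_sched_nonempty[OF assms] by blast
  show ?thesis using valid_schedD[OF assms(1) u(1)] u(2) by simp
qed

locale work_conserving_schedule =
  fixes r :: "'j \<Rightarrow> real" and \<rho> :: "'j \<Rightarrow> 'a::linorder" and S :: "'j set" and \<sigma> :: "'j sched"
  assumes finite_S: "finite S" and valid: "valid_sched r S \<sigma>" and inj: "inj_on \<rho> S"
    and work_conserving: "work_conserving r \<rho> S \<sigma>"
begin

lemma busy_on_lower_priorities:
  assumes "i \<in> S" "{k \<in> S. \<rho> k \<le> \<rho> i} \<subseteq> Y"
  shows "busy_on \<sigma> Y (r i) (completion_time \<sigma> i)"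
  using work_conserving assms busy_on_mono unfolding work_conserving_def by blast

lemma priority_less: "i \<in> S \<Longrightarrow> j \<in> S \<Longrightarrow> i \<noteq> j \<Longrightarrow> \<rho> i \<le> \<rho> j \<Longrightarrow> \<rho> i < \<rho> j"
  using inj unfolding inj_on_def by (metis order_le_less)

text \<open>Otherwise some point of the piece of j lies in the window from the release to the
  completion of i, and is covered by a piece of priority at least that of i, overlapping it.\<close>

lemma higher_priority_completed:
  assumes "i \<in> S" "(j, u) \<in> pieces \<sigma> S" "\<rho> i < \<rho> j" "r i < snd (\<sigma> j ! u)"
  shows "completion_time \<sigma> i \<le> fst (\<sigma> j ! u)"
proof (rule ccontr)
  assume late: "\<not> completion_time \<sigma> i \<le> fst (\<sigma> j ! u)"
  define z where "z = (max (fst (\<sigma> j ! u)) (r i) + min (snd (\<sigma> j ! u)) (completion_time \<sigma> i)) / 2"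
  have "fst (\<sigma> j ! u) < snd (\<sigma> j ! u)" using valid_schedD(2)[OF valid assms(2)] by simp
  then have z: "fst (\<sigma> j ! u) < z" "z < snd (\<sigma> j ! u)" "r i \<le> z" "z < completion_time \<sigma> i"
    using late assms(4) release_lt_completion_time[OF valid assms(1)] unfolding z_def by auto
  then obtain kv where kv: "kv \<in> pieces \<sigma> S" "\<rho> (fst kv) \<le> \<rho> i"
    "fst (piece \<sigma> kv) \<le> z" "z \<le> snd (piece \<sigma> kv)"
    using busy_on_lower_priorities[OF assms(1) order_refl]
    unfolding busy_on_def busy_def pieces_def by force
  then have "kv \<noteq> (j, u)" using assms(3) by auto
  then have "non_overlapping (piece \<sigma> kv) (\<sigma> j ! u)"
    using valid_sched_non_overlapping[OF valid kv(1) assms(2)] by simp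
  then show False using kv(3,4) z(1,2) unfolding non_overlapping_def by linarith
qed

lemma completion_time_busy_period:
  assumes "j \<in> S"
  obtains X k where "X \<subseteq> {i \<in> S. \<rho> i \<le> \<rho> j}" "k \<in> X" "\<And>i. i \<in> X \<Longrightarrow> r k \<le> r i"
    "processing \<sigma> X = completion_time \<sigma> j - r k"
proof -
  let ?Y = "{i \<in> S. \<rho> i \<le> \<rho> j}"
  obtain u where u: "(j, u) \<in> pieces \<sigma> S" "snd (\<sigma> j ! u) = completion_time \<sigma> j"
    using completion_time_attained[of j S \<sigma>] assms valid_sched_nonempty[OF valid assms] by blast
  show ?thesis
  proof (rule busy_period)
    show "finite ?Y" using finite_S by simp
    show "valid_sched r ?Y \<sigma>" using valid by (rule valid_sched_subset[rotated]) auto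
    show "busy_on \<sigma> ?Y (r i) (completion_time \<sigma> i)" if "i \<in> ?Y" for i
      using that by (intro busy_on_lower_priorities) auto
    show "(j, u) \<in> pieces \<sigma> ?Y" using u(1) by simp
    show "fst (piece \<sigma> (j, u)) < completion_time \<sigma> j"
      using valid_schedD(2)[OF valid u(1)] u(2) by simp
    show "busy_on \<sigma> ?Y (fst (piece \<sigma> (j, u))) (completion_time \<sigma> j)"
      using busy_on_piece[of "(j, u)" \<sigma> ?Y] u by simp
    show "completion_time \<sigma> (fst iu) \<le> completion_time \<sigma> j"
      if "iu \<in> pieces \<sigma> ?Y" "fst (piece \<sigma> iu) < completion_time \<sigma> j" for iu
    proof (cases "fst iu = j")
      case False
      then have "\<rho> (fst iu) < \<rho> j" using that(1) assms by (cases iu) (auto intro: priority_less)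
      moreover have "r (fst iu) < snd (\<sigma> j ! u)"
        using valid_schedD(1)[OF valid, of iu] that u(2) pieces_mono[of ?Y S \<sigma>] by fastforce
      ultimately have "completion_time \<sigma> (fst iu) \<le> fst (\<sigma> j ! u)"
        using that(1) u(1) by (intro higher_priority_completed) (auto simp: pieces_def)
      then show ?thesis using valid_schedD(2)[OF valid u(1)] u(2) by simp
    qed simp
  qed (use that in blast)+
qed

lemma start_time_busy_period:
  assumes "j \<in> S" "r j < start_time \<sigma> j"
  obtains X k where "X \<subseteq> {i \<in> S. \<rho> i < \<rho> j}" "k \<in> X"
    "processing \<sigma> X = start_time \<sigma> j - r k"
proof -
  let ?Y = "{i \<in> S. \<rho> i < \<rho> j}"
  obtain u where u: "(j, u) \<in> pieces \<sigma> S" "fst (\<sigma> j ! u) = start_time \<sigma> j"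
    using start_time_attained[of j S \<sigma>] assms valid_sched_nonempty[OF valid] by blast
  have "start_time \<sigma> j < completion_time \<sigma> j"
    using valid_schedD(2)[OF valid u(1)] piece_end_le_completion_time[OF u(1)] u(2) by simp
  have busy_Y: "busy_on \<sigma> ?Y (r j) (start_time \<sigma> j)"
    unfolding busy_on_def
  proof
    fix z assume z: "z \<in> {r j..<start_time \<sigma> j}"
    then obtain kv where kv: "kv \<in> pieces \<sigma> S" "\<rho> (fst kv) \<le> \<rho> j"
      "fst (piece \<sigma> kv) \<le> z" "z \<le> snd (piece \<sigma> kv)"
      using busy_on_lower_priorities[OF assms(1) order_refl] \<open>start_time \<sigma> j < completion_time \<sigma> j\<close>
      unfolding busy_on_def busy_def pieces_def by force
    have "fst kv \<noteq> j"
      using start_time_le_piece_start[OF kv(1)] kv(3) z by auto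
    then have "kv \<in> pieces \<sigma> ?Y"
      using kv(1,2) assms(1) priority_less by (cases kv) auto
    then show "busy \<sigma> ?Y z" using kv(3,4) unfolding busy_def by blast
  qed
  then have "busy \<sigma> ?Y (r j)" using assms(2) unfolding busy_on_def by simp
  then obtain kv where kv: "kv \<in> pieces \<sigma> ?Y" "fst (piece \<sigma> kv) \<le> r j" "r j \<le> snd (piece \<sigma> kv)"
    unfolding busy_def by blast
  show ?thesis
  proof (rule busy_period)
    show "finite ?Y" using finite_S by simp
    show "valid_sched r ?Y \<sigma>" using valid by (rule valid_sched_subset[rotated]) auto
    show "busy_on \<sigma> ?Y (r i) (completion_time \<sigma> i)" if "i \<in> ?Y" for i
      using that by (intro busy_on_lower_priorities) auto
    show "kv \<in> pieces \<sigma> ?Y" by (rule kv(1))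
    show "fst (piece \<sigma> kv) < start_time \<sigma> j" using kv(2) assms(2) by simp
    show "busy_on \<sigma> ?Y (fst (piece \<sigma> kv)) (start_time \<sigma> j)"
      using kv busy_Y by (rule busy_on_extend_by_piece)
    show "completion_time \<sigma> (fst iu) \<le> start_time \<sigma> j"
      if "iu \<in> pieces \<sigma> ?Y" "fst (piece \<sigma> iu) < start_time \<sigma> j" for iu
    proof -
      have "r (fst iu) < snd (\<sigma> j ! u)"
        using valid_schedD(1)[OF valid, of iu] valid_schedD(2)[OF valid u(1)] that u(2)
          pieces_mono[of ?Y S \<sigma>] by fastforce
      moreover have "fst iu \<in> S" "\<rho> (fst iu) < \<rho> j" using that(1) by (auto simp: pieces_def)
      ultimately show ?thesis
        using higher_priority_completed[OF _ u(1)] u(2) by simp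
    qed
  qed (use that in blast)+
qed

lemma start_time_eq_release_plus_processing:
  assumes "j \<in> S"
  obtains X k where "X \<subseteq> S" "k \<in> S" "start_time \<sigma> j = r k + processing \<sigma> X"
proof -
  obtain u where "(j, u) \<in> pieces \<sigma> S" "fst (\<sigma> j ! u) = start_time \<sigma> j"
    using start_time_attained[of j S \<sigma>] assms valid_sched_nonempty[OF valid] by blast
  then have "r j \<le> start_time \<sigma> j" using valid_schedD(1)[OF valid] by fastforce
  then consider "start_time \<sigma> j = r j" | "r j < start_time \<sigma> j" by fastforce
  then show ?thesis
  proof cases
    case 1
    then show ?thesis using that[of "{}" j] assms by (simp add: processing_def)
  next
    case 2
    then obtain X k where "X \<subseteq> {i \<in> S. \<rho> i < \<rho> j}" "k \<in> X"
      "processing \<sigma> X = start_time \<sigma> j - r k"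
      using start_time_busy_period[OF assms] by blast
    then show ?thesis using that[of X k] by auto
  qed
qed

end

section \<open>Schedules with start and completion times in the time set\<close>

lemma release_plus_sum_mem_time_set:
  assumes "finite J" "k \<in> J" "X \<subseteq> J" "card X \<le> s"
  shows "r k + (\<Sum>i\<in>X. p i) \<in> time_set J r p s"
proof -
  define c where "c q = card {i \<in> X. p i = q}" for q
  have "finite X" using assms finite_subset by blast
  have "(\<Sum>i\<in>X. p i) = (\<Sum>q\<in>p ` X. \<Sum>i\<in>{i \<in> X. p i = q}. p i)"
    using \<open>finite X\<close> by (rule sum.image_gen)
  also have "\<dots> = (\<Sum>q\<in>p ` X. real (c q) * q)"
    unfolding c_def by (intro sum.cong refl) simp
  also have "\<dots> = (\<Sum>q\<in>p ` J. real (c q) * q)"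
    using assms(1,3) unfolding c_def
    by (intro sum.mono_neutral_left) (auto simp: card_eq_0_iff image_iff, metis)
  finally have "(\<Sum>i\<in>X. p i) = (\<Sum>q\<in>p ` J. real (c q) * q)" .
  moreover have "c q \<le> s" for q
    unfolding c_def using card_mono[OF \<open>finite X\<close>, of "{i \<in> X. p i = q}"] assms(4) by auto
  ultimately show ?thesis unfolding time_set_def using assms(2) by fastforce
qed

lemma finite_time_set:
  assumes "finite J"
  shows "finite (time_set J r p s)"
proof (rule finite_subset)
  let ?val = "\<lambda>(j', c). r j' + (\<Sum>q\<in>p ` J. real (c q) * q)"
  show "time_set J r p s \<subseteq> ?val ` (J \<times> (p ` J \<rightarrow>\<^sub>E {..s}))"
  proof
    fix x assume "x \<in> time_set J r p s"
    then obtain j' c where jc: "x = r j' + (\<Sum>q\<in>p ` J. real (c q) * q)" "j' \<in> J" "\<forall>q\<in>p ` J. c q \<le> s"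
      unfolding time_set_def by blast
    then have "x = ?val (j', restrict c (p ` J))" "(j', restrict c (p ` J)) \<in> J \<times> (p ` J \<rightarrow>\<^sub>E {..s})"
      by auto
    then show "x \<in> ?val ` (J \<times> (p ` J \<rightarrow>\<^sub>E {..s}))" by blast
  qed
  show "finite (?val ` (J \<times> (p ` J \<rightarrow>\<^sub>E {..s})))"
    using assms by (intro finite_imageI finite_cartesian_product finite_PiE) auto
qed

lemma processing_le_completion_window:
  assumes "finite X" "valid_sched r X \<sigma>" "X \<noteq> {}"
    and "\<And>i. i \<in> X \<Longrightarrow> b \<le> r i \<and> completion_time \<sigma> i \<le> c"
  shows "processing \<sigma> X \<le> c - b"
proof (rule processing_le_window[OF assms(1,2)])
  obtain i where "i \<in> X" using assms(3) by blast
  then show "b \<le> c" using assms(4)[of i] release_lt_completion_time[OF assms(2)] by fastforce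
  show "b \<le> fst (piece \<sigma> iu) \<and> snd (piece \<sigma> iu) \<le> c" if "iu \<in> pieces \<sigma> X" for iu
    using that assms(4)[of "fst iu"] valid_schedD(1)[OF assms(2) that] piece_end_le_completion_time[OF that]
    by (cases iu) auto
qed

lemma ex_schedule_in_time_set:
  assumes "finite J" "\<forall>j\<in>J. 0 < p j" and feas: "feasible J r p s S \<sigma>'"
  shows "\<exists>\<sigma>. feasible J r p s S \<sigma> \<and> (\<forall>j\<in>S. start_time \<sigma> j \<in> time_set J r p s \<and>
    completion_time \<sigma> j \<in> time_set J r p s \<and> completion_time \<sigma> j \<le> completion_time \<sigma>' j)"
proof -
  have SJ: "S \<subseteq> J" "card S \<le> s" and valid': "valid_sched r S \<sigma>'"
    and len': "\<forall>j\<in>S. sum_list (map piece_len (\<sigma>' j)) = p j"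
    using feas unfolding feasible_iff_valid_sched by auto
  have "finite S" using assms(1) SJ(1) by (rule finite_subset[rotated])
  obtain h :: "'a \<Rightarrow> nat" where "inj_on h S" using finite_imp_inj_to_nat_seg[OF \<open>finite S\<close>] by blast
  define \<rho> where "\<rho> i = (completion_time \<sigma>' i, h i)" for i
  have "inj_on \<rho> S" using \<open>inj_on h S\<close> unfolding \<rho>_def inj_on_def by simp
  have \<rho>_le: "completion_time \<sigma>' i \<le> completion_time \<sigma>' j" if "\<rho> i \<le> \<rho> j" for i j
    using that unfolding \<rho>_def by auto
  obtain \<sigma> where \<sigma>: "valid_sched r S \<sigma>" "\<forall>j\<in>S. sum_list (map piece_len (\<sigma> j)) = p j"
    "work_conserving r \<rho> S \<sigma>"
    using ex_work_conserving_schedule[OF \<open>finite S\<close>, of p] assms(2) SJ(1) by blast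
  interpret work_conserving_schedule r \<rho> S \<sigma>
    using \<open>finite S\<close> \<sigma>(1,3) \<open>inj_on \<rho> S\<close> by unfold_locales
  have processing_eq: "processing \<tau> X = (\<Sum>i\<in>X. p i)"
    if "X \<subseteq> S" "\<tau> = \<sigma> \<or> \<tau> = \<sigma>'" for X \<tau>
    using that \<sigma>(2) len' unfolding processing_def by (intro sum.cong) auto
  have in_T: "r k + (\<Sum>i\<in>X. p i) \<in> time_set J r p s" if "k \<in> S" "X \<subseteq> S" for k X
    using that SJ card_mono[OF \<open>finite S\<close> \<open>X \<subseteq> S\<close>]
    by (intro release_plus_sum_mem_time_set[OF assms(1)]) auto
  have "start_time \<sigma> j \<in> time_set J r p s \<and> completion_time \<sigma> j \<in> time_set J r p s \<and>
    completion_time \<sigma> j \<le> completion_time \<sigma>' j" if "j \<in> S" for j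
  proof (intro conjI)
    obtain X k where X: "X \<subseteq> {i \<in> S. \<rho> i \<le> \<rho> j}" "k \<in> X" "\<And>i. i \<in> X \<Longrightarrow> r k \<le> r i"
      "processing \<sigma> X = completion_time \<sigma> j - r k"
      using completion_time_busy_period[OF \<open>j \<in> S\<close>] by blast
    have "X \<subseteq> S" using X(1) by blast
    then have C: "completion_time \<sigma> j = r k + (\<Sum>i\<in>X. p i)" using X(4) processing_eq by simp
    then show "completion_time \<sigma> j \<in> time_set J r p s" using in_T X(2) \<open>X \<subseteq> S\<close> by auto
    have "processing \<sigma>' X \<le> completion_time \<sigma>' j - r k"
      using X \<rho>_le \<open>X \<subseteq> S\<close> \<open>finite S\<close>
      by (intro processing_le_completion_window[where r = r] valid_sched_subset[OF _ valid']) (auto intro: finite_subset)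
    then show "completion_time \<sigma> j \<le> completion_time \<sigma>' j" using C processing_eq[OF \<open>X \<subseteq> S\<close>] by simp
  next
    obtain X k where "X \<subseteq> S" "k \<in> S" "start_time \<sigma> j = r k + processing \<sigma> X"
      using start_time_eq_release_plus_processing[OF \<open>j \<in> S\<close>] by blast
    then show "start_time \<sigma> j \<in> time_set J r p s" using in_T processing_eq by simp
  qed
  moreover have "feasible J r p s S \<sigma>" using SJ \<sigma>(1,2) unfolding feasible_iff_valid_sched by blast
  ultimately show ?thesis by blast
qed

lemma profit_le_if_completes_earlier:
  assumes "\<And>j. j \<in> S \<Longrightarrow> antimono (f j)" "\<And>j. j \<in> S \<Longrightarrow> completion_time \<sigma> j \<le> completion_time \<sigma>' j"
  shows "profit f S \<sigma>' \<le> profit f S \<sigma>"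
  unfolding profit_def using assms by (intro sum_mono) (simp add: antimonoD)

lemma finite_profits:
  assumes "finite J" "finite T"
  shows "finite {profit f S \<sigma> | S \<sigma>. S \<subseteq> J \<and> (\<forall>j\<in>S. completion_time \<sigma> j \<in> T)}"
proof (rule finite_subset)
  show "{profit f S \<sigma> | S \<sigma>. S \<subseteq> J \<and> (\<forall>j\<in>S. completion_time \<sigma> j \<in> T)}
      \<subseteq> (\<Union>S\<in>Pow J. (\<lambda>g. \<Sum>j\<in>S. f j (g j)) ` (S \<rightarrow>\<^sub>E T))"
  proof clarify
    fix S \<sigma> assume "S \<subseteq> J" "\<forall>j\<in>S. completion_time \<sigma> j \<in> T"
    then have "restrict (completion_time \<sigma>) S \<in> S \<rightarrow>\<^sub>E T"
      and "profit f S \<sigma> = (\<Sum>j\<in>S. f j (restrict (completion_time \<sigma>) S j))"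
      unfolding profit_def by auto
    with \<open>S \<subseteq> J\<close> show "profit f S \<sigma> \<in> (\<Union>S\<in>Pow J. (\<lambda>g. \<Sum>j\<in>S. f j (g j)) ` (S \<rightarrow>\<^sub>E T))"
      by blast
  qed
  show "finite (\<Union>S\<in>Pow J. (\<lambda>g. \<Sum>j\<in>S. f j (g j)) ` (S \<rightarrow>\<^sub>E T))"
    using assms by (intro finite_UN_I finite_imageI finite_PiE) (auto intro: finite_subset)
qed

lemma ex_max_profit_in_time_set:
  fixes f :: "'j \<Rightarrow> real \<Rightarrow> real"
  assumes "finite J"
  obtains S \<sigma> where "feasible J r p s S \<sigma>"
    "\<forall>j\<in>S. start_time \<sigma> j \<in> time_set J r p s \<and> completion_time \<sigma> j \<in> time_set J r p s"
    "\<And>S' \<sigma>'. feasible J r p s S' \<sigma>' \<Longrightarrow>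
      \<forall>j\<in>S'. start_time \<sigma>' j \<in> time_set J r p s \<and> completion_time \<sigma>' j \<in> time_set J r p s \<Longrightarrow>
      profit f S' \<sigma>' \<le> profit f S \<sigma>"
proof -
  let ?T = "time_set J r p s"
  define V where "V = {profit f S \<sigma> | S \<sigma>. feasible J r p s S \<sigma> \<and>
    (\<forall>j\<in>S. start_time \<sigma> j \<in> ?T \<and> completion_time \<sigma> j \<in> ?T)}"
  have "V \<subseteq> {profit f S \<sigma> | S \<sigma>. S \<subseteq> J \<and> (\<forall>j\<in>S. completion_time \<sigma> j \<in> ?T)}"
    unfolding V_def feasible_def by (smt (verit) Collect_mono_iff)
  then have "finite V"
    using finite_profits[OF assms(1) finite_time_set[OF assms(1)]] by (rule finite_subset)
  moreover have "V \<noteq> {}"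
    unfolding V_def feasible_def by (auto intro!: exI[of _ "{}"])
  ultimately have "Max V \<in> V" by (rule Max_in)
  then obtain S \<sigma> where S: "Max V = profit f S \<sigma>" "feasible J r p s S \<sigma>"
    "\<forall>j\<in>S. start_time \<sigma> j \<in> ?T \<and> completion_time \<sigma> j \<in> ?T"
    by (subst (asm) (2) V_def) blast
  show ?thesis
  proof (rule that[OF S(2,3)])
    fix S' \<sigma>' assume "feasible J r p s S' \<sigma>'"
      "\<forall>j\<in>S'. start_time \<sigma>' j \<in> ?T \<and> completion_time \<sigma>' j \<in> ?T"
    then have "profit f S' \<sigma>' \<in> V" unfolding V_def by blast
    then show "profit f S' \<sigma>' \<le> profit f S \<sigma>"
      using Max_ge[OF \<open>finite V\<close>] S(1) by simp
  qed
qed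

theorem mainTheorem11:
  fixes J :: "'j set" and r p :: "'j \<Rightarrow> real" and f :: "'j \<Rightarrow> real \<Rightarrow> real" and s :: nat
  assumes "finite J"
    and "\<forall>j\<in>J. p j > 0"
    and "\<forall>j\<in>J. antimono (f j)"
  shows "\<exists>S \<sigma>. feasible J r p s S \<sigma> \<and>
           (\<forall>S' \<sigma>'. feasible J r p s S' \<sigma>' \<longrightarrow> profit f S' \<sigma>' \<le> profit f S \<sigma>) \<and>
           (\<forall>j\<in>S. start_time \<sigma> j \<in> time_set J r p s \<and>
                   completion_time \<sigma> j \<in> time_set J r p s)"
proof -
  obtain S \<sigma> where S: "feasible J r p s S \<sigma>"
    "\<forall>j\<in>S. start_time \<sigma> j \<in> time_set J r p s \<and> completion_time \<sigma> j \<in> time_set J r p s"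
    and best: "\<And>S' \<sigma>'. feasible J r p s S' \<sigma>' \<Longrightarrow>
      \<forall>j\<in>S'. start_time \<sigma>' j \<in> time_set J r p s \<and> completion_time \<sigma>' j \<in> time_set J r p s \<Longrightarrow>
      profit f S' \<sigma>' \<le> profit f S \<sigma>"
    using ex_max_profit_in_time_set[OF assms(1), where r = r and p = p and s = s and f = f] by blast
  have "profit f S' \<sigma>' \<le> profit f S \<sigma>" if feas': "feasible J r p s S' \<sigma>'" for S' \<sigma>'
  proof -
    obtain \<sigma>'' where \<sigma>'': "feasible J r p s S' \<sigma>''" "\<forall>j\<in>S'. start_time \<sigma>'' j \<in> time_set J r p s \<and>
      completion_time \<sigma>'' j \<in> time_set J r p s \<and> completion_time \<sigma>'' j \<le> completion_time \<sigma>' j"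
      using ex_schedule_in_time_set[OF assms(1,2) feas'] by blast
    have "profit f S' \<sigma>' \<le> profit f S' \<sigma>''"
      using \<sigma>''(2) assms(3) feas' unfolding feasible_def by (intro profit_le_if_completes_earlier) auto
    also have "\<dots> \<le> profit f S \<sigma>" using best[OF \<sigma>''(1)] \<sigma>''(2) by simp
    finally show ?thesis .
  qed
  then show ?thesis using S by blast
qed

end
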